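(* Let $G$ be a connected graph. If $\sigma_2(G)\ge 2\widetilde{\alpha}(G)-2$, then $G$ is traceable (i.e., $G$ contains a path through every vertex).
   Context: All graphs are finite and simple. For a graph $G$ that is not complete, $\sigma_2(G)=\min\{d_G(u)+d_G(v): u,v\in V(G),\ u\ne v,\ uv\notin E(G)\}$; if $G$ is complete, $\sigma_2(G)=\infty$. An $(s,t)$-bipartite-hole in $G$ consists of two disjoint vertex sets $S,T\subseteq V(G)$ with $|S|=s$, $|T|=t$ and no edge of $G$ having one endpoint in $S$ and the other in $T$. The bipartite-hole-number $\widetilde{\alpha}(G)$ is the minimum integer $k$ such that there exist positive integers $s,t$ with $s+t=k+1$ for which $G$ contains no $(s,t)$-bipartite-hole. *)

theory Defs
  imports Main "HOL-Library.Extended_Nat"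
begin

definition simple_graph :: "'a set \<Rightarrow> ('a \<Rightarrow> 'a \<Rightarrow> bool) \<Rightarrow> bool" where
  "simple_graph V E \<longleftrightarrow> finite V \<and> (\<forall>u v. E u v \<longrightarrow> u \<in> V \<and> v \<in> V)
     \<and> (\<forall>u v. E u v \<longrightarrow> E v u) \<and> (\<forall>u. \<not> E u u)"

definition degree :: "'a set \<Rightarrow> ('a \<Rightarrow> 'a \<Rightarrow> bool) \<Rightarrow> 'a \<Rightarrow> nat" where
  "degree V E u = card {v \<in> V. E u v}"

text \<open>sigma_2; the infimum of the empty set in enat is infinity (complete graph case).\<close>
definition sigma2 :: "'a set \<Rightarrow> ('a \<Rightarrow> 'a \<Rightarrow> bool) \<Rightarrow> enat" where
  "sigma2 V E = Inf {enat (degree V E u + degree V E v) | u v.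
                      u \<in> V \<and> v \<in> V \<and> u \<noteq> v \<and> \<not> E u v}"

definition has_bhole :: "'a set \<Rightarrow> ('a \<Rightarrow> 'a \<Rightarrow> bool) \<Rightarrow> nat \<Rightarrow> nat \<Rightarrow> bool" where
  "has_bhole V E s t \<longleftrightarrow> (\<exists>S T. S \<subseteq> V \<and> T \<subseteq> V \<and> S \<inter> T = {} \<and>
      card S = s \<and> card T = t \<and> (\<forall>x\<in>S. \<forall>y\<in>T. \<not> E x y))"

definition bhole_number :: "'a set \<Rightarrow> ('a \<Rightarrow> 'a \<Rightarrow> bool) \<Rightarrow> nat" where
  "bhole_number V E = (LEAST k. \<exists>s t. s > 0 \<and> t > 0 \<and> s + t = k + 1 \<and> \<not> has_bhole V E s t)"

definition is_path :: "'a set \<Rightarrow> ('a \<Rightarrow> 'a \<Rightarrow> bool) \<Rightarrow> 'a list \<Rightarrow> bool" where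
  "is_path V E p \<longleftrightarrow> p \<noteq> [] \<and> distinct p \<and> set p \<subseteq> V \<and>
      (\<forall>i. Suc i < length p \<longrightarrow> E (p ! i) (p ! Suc i))"

definition connected_graph :: "'a set \<Rightarrow> ('a \<Rightarrow> 'a \<Rightarrow> bool) \<Rightarrow> bool" where
  "connected_graph V E \<longleftrightarrow> V \<noteq> {} \<and>
     (\<forall>u\<in>V. \<forall>v\<in>V. \<exists>p. is_path V E p \<and> hd p = u \<and> last p = v)"

definition traceable :: "'a set \<Rightarrow> ('a \<Rightarrow> 'a \<Rightarrow> bool) \<Rightarrow> bool" where
  "traceable V E \<longleftrightarrow> (\<exists>p. is_path V E p \<and> set p = V)"

end

theory Submission
  imports Defs
begin

text \<open>Let k be the bipartite-hole number and let s + t = k + 1 be such that there is no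
(s,t)-bipartite-hole. Let R be the set of vertices of degree less than k (all of V if there is
none) and P a longest path starting in R. If P misses a vertex y, let H be the component of y
in G - P, X the vertices of P with a neighbour in H, and I the predecessors on P of the vertices
of X together with the end of P. Maximality of P (insert a path through H, possibly after
reversing a segment of P) makes I independent and without edges to H, and the degree-sum
condition then gives |H| + |I| \<ge> k + 1 and |V - (H \<union> X)| \<ge> k - 1. An (s,t)-bipartite-hole is
then found either inside H \<union> I or between H and V - (H \<union> X).\<close>

lemma simple_graph_sym: "simple_graph V E \<Longrightarrow> E a b \<Longrightarrow> E b a"
  and simple_graph_irrefl: "simple_graph V E \<Longrightarrow> \<not> E a a"
  and simple_graph_edge_in: "simple_graph V E \<Longrightarrow> E a b \<Longrightarrow> a \<in> V \<and> b \<in> V"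
  and simple_graph_finite: "simple_graph V E \<Longrightarrow> finite V"
  unfolding simple_graph_def by blast+

lemma is_path_iff_successively:
  "is_path V E p \<longleftrightarrow> p \<noteq> [] \<and> distinct p \<and> set p \<subseteq> V \<and> successively E p"
  unfolding is_path_def successively_conv_nth by blast

lemma successively_take: "successively R xs \<Longrightarrow> successively R (take n xs)"
  and successively_drop: "successively R xs \<Longrightarrow> successively R (drop n xs)"
  by (metis append_take_drop_id successively_append_iff)+

lemma successively_rev_if_sym:
  "(\<And>a b. R a b \<Longrightarrow> R b a) \<Longrightarrow> successively R xs \<Longrightarrow> successively R (rev xs)"
  unfolding successively_rev by (erule successively_mono)

lemma last_take_conv_nth: "0 < n \<Longrightarrow> n \<le> length xs \<Longrightarrow> last (take n xs) = xs ! (n - 1)"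
  by (subst last_conv_nth) (auto simp: min_def)

lemma is_path_length_le_card: "simple_graph V E \<Longrightarrow> is_path V E p \<Longrightarrow> length p \<le> card V"
  by (metis card_mono distinct_card is_path_def simple_graph_finite)

lemma rtranclp_imp_successively:
  assumes "R\<^sup>*\<^sup>* a b"
  obtains q where "q \<noteq> []" "hd q = a" "last q = b" "distinct q" "successively R q"
    "\<forall>x\<in>set q. R\<^sup>*\<^sup>* a x"
proof -
  from assms have "\<exists>q. q \<noteq> [] \<and> hd q = a \<and> last q = b \<and> distinct q \<and> successively R q
      \<and> (\<forall>x\<in>set q. R\<^sup>*\<^sup>* a x)"
  proof (induction rule: rtranclp_induct)
    case base
    show ?case by (intro exI[of _ "[a]"]) auto
  next
    case (step b c)
    then obtain q where q: "q \<noteq> []" "hd q = a" "last q = b" "distinct q" "successively R q"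
      "\<forall>x\<in>set q. R\<^sup>*\<^sup>* a x" by blast
    show ?case
    proof (cases "c \<in> set q")
      case True
      then obtain j where j: "j < length q" "q ! j = c" by (auto simp: in_set_conv_nth)
      show ?thesis
        using q j by (intro exI[of _ "take (Suc j) q"])
          (auto simp: last_take_conv_nth successively_take dest: in_set_takeD)
    next
      case False
      show ?thesis
        using q False step by (intro exI[of _ "q @ [c]"]) (auto simp: successively_append_iff)
    qed
  qed
  then show thesis using that by blast
qed

lemma path_in_closed_set:
  assumes "is_path V E p" "hd p \<in> S" and closed: "\<And>a b. a \<in> S \<Longrightarrow> E a b \<Longrightarrow> b \<in> S"
  shows "set p \<subseteq> S"
proof -
  have "p ! i \<in> S" if "i < length p" for i
    using that
  proof (induction i)
    case 0
    then show ?case using assms(2) by (simp add: hd_conv_nth)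
  next
    case (Suc i)
    then show ?case using closed assms(1) unfolding is_path_def by simp
  qed
  then show ?thesis by (auto simp: in_set_conv_nth)
qed

lemma connected_graph_closed_set:
  assumes "connected_graph V E" "a \<in> S" "S \<subseteq> V" "b \<in> V"
    and closed: "\<And>u v. u \<in> S \<Longrightarrow> E u v \<Longrightarrow> v \<in> S"
  shows "b \<in> S"
proof -
  obtain p where p: "is_path V E p" "hd p = a" "last p = b"
    using assms(1-4) unfolding connected_graph_def by blast
  have "set p \<subseteq> S" using path_in_closed_set[OF p(1)] p(2) assms(2) closed by blast
  moreover have "p \<noteq> []" using p(1) by (simp add: is_path_def)
  ultimately show ?thesis using p(3) by auto
qed

lemma is_path_insert:
  assumes P: "is_path V E P" and q: "is_path V E q" "set q \<inter> set P = {}"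
    and i: "0 < i" "i < length P"
    and "E (P ! (i - 1)) (hd q)" "E (last q) (P ! i)"
  shows "is_path V E (take i P @ q @ drop i P)"
proof -
  have "set (take i P) \<inter> set (drop i P) = {}"
    using P by (simp add: is_path_def set_take_disj_set_drop_if_distinct)
  moreover have "last (take i P) = P ! (i - 1)" "hd (drop i P) = P ! i"
    using i by (simp_all add: last_take_conv_nth hd_drop_conv_nth)
  ultimately show ?thesis
    using assms by (auto simp: is_path_iff_successively successively_append_iff
        successively_take successively_drop dest: in_set_takeD in_set_dropD)
qed

lemma is_path_reverse_segment_insert:
  assumes edge_sym: "\<And>a b. E a b \<Longrightarrow> E b a"
    and P: "is_path V E P" and q: "is_path V E q" "set q \<inter> set P = {}"
    and ij: "0 < i" "i < j" "j < length P"
    and e0: "E (P ! (i - 1)) (P ! (j - 1))" and e1: "E (P ! i) (hd q)" and e2: "E (last q) (P ! j)"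
  shows "is_path V E (take i P @ rev (take (j - i) (drop i P)) @ q @ drop j P)"
proof -
  define A B C where "A = take i P" and "B = take (j - i) (drop i P)" and "C = drop j P"
  have PABC: "P = A @ B @ C"
    unfolding A_def B_def C_def using ij
    by (metis append_take_drop_id drop_drop le_add_diff_inverse2 less_imp_le add.commute)
  have dP: "distinct (A @ B @ C)" "set (A @ B @ C) \<subseteq> V" "successively E (A @ B @ C)"
    using P PABC by (auto simp: is_path_iff_successively)
  have dq: "distinct q" "set q \<subseteq> V" "successively E q" "q \<noteq> []"
    using q by (auto simp: is_path_iff_successively)
  have ne: "A \<noteq> []" "B \<noteq> []" "C \<noteq> []"
    using ij unfolding A_def B_def C_def by auto
  have ends: "last A = P ! (i - 1)" "hd B = P ! i" "hd C = P ! j" "last B = P ! (j - 1)"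
    unfolding A_def B_def C_def using ij by (simp_all add: last_take_conv_nth hd_drop_conv_nth)
  have sB: "successively E A" "successively E B" "successively E C"
    using dP(3) by (auto simp: successively_append_iff)
  have rB: "successively E (rev B)"
    using edge_sym sB(2) by (rule successively_rev_if_sym)
  have "distinct (A @ rev B @ q @ C)"
    using dP(1) dq(1) q(2) PABC by (auto simp: distinct_append)
  moreover have "set (A @ rev B @ q @ C) \<subseteq> V"
    using dP(2) dq(2) by auto
  moreover have "successively E (A @ rev B @ q @ C)"
    using sB rB dq(3,4) ne ends e0 e1 e2 by (simp add: successively_append_iff hd_rev last_rev)
  ultimately have "is_path V E (A @ rev B @ q @ C)"
    using ne by (simp add: is_path_iff_successively)
  then show ?thesis by (simp add: A_def B_def C_def)
qed

lemma is_path_reverse_tail_extend: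
  assumes edge_sym: "\<And>a b. E a b \<Longrightarrow> E b a"
    and P: "is_path V E P" and v: "v \<in> V" "v \<notin> set P"
    and i: "0 < i" "i < length P"
    and e0: "E (P ! (i - 1)) (last P)" and e1: "E (P ! i) v"
  shows "is_path V E (take i P @ rev (drop i P) @ [v])"
proof -
  define A C where "A = take i P" and "C = drop i P"
  have PAC: "P = A @ C" unfolding A_def C_def by simp
  have dP: "distinct (A @ C)" "set (A @ C) \<subseteq> V" "successively E (A @ C)"
    using P PAC by (auto simp: is_path_iff_successively)
  have ne: "A \<noteq> []" "C \<noteq> []" and lC: "last C = last P" using i unfolding A_def C_def by auto
  have ends: "last A = P ! (i - 1)" "hd C = P ! i"
    unfolding A_def C_def using i by (simp_all add: last_take_conv_nth hd_drop_conv_nth)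
  have sAC: "successively E A" "successively E C"
    using dP(3) by (auto simp: successively_append_iff)
  have rC: "successively E (rev C)"
    using edge_sym sAC(2) by (rule successively_rev_if_sym)
  have "distinct (A @ rev C @ [v])" using dP(1) v PAC by (auto simp: distinct_append)
  moreover have "set (A @ rev C @ [v]) \<subseteq> V" using dP(2) v by auto
  moreover have "successively E (A @ rev C @ [v])"
    using sAC rC ne ends lC e0 e1 by (simp add: successively_append_iff hd_rev last_rev)
  ultimately have "is_path V E (A @ rev C @ [v])"
    by (simp add: is_path_iff_successively)
  then show ?thesis by (simp add: A_def C_def)
qed

lemma has_bholeI:
  assumes "S \<subseteq> V" "T \<subseteq> V" "S \<inter> T = {}" "\<And>x y. x \<in> S \<Longrightarrow> y \<in> T \<Longrightarrow> \<not> E x y"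
  shows "has_bhole V E (card S) (card T)"
  unfolding has_bhole_def using assms by (intro exI[of _ S] exI[of _ T]) simp

lemma has_bhole_swap:
  assumes "simple_graph V E" "has_bhole V E s t"
  shows "has_bhole V E t s"
proof -
  obtain S T where "S \<subseteq> V" "T \<subseteq> V" "S \<inter> T = {}" "card S = s" "card T = t"
    and "\<forall>x\<in>S. \<forall>y\<in>T. \<not> E x y"
    using assms(2) unfolding has_bhole_def by blast
  then show ?thesis
    using has_bholeI[of T V S E] simple_graph_sym[OF assms(1)] by blast
qed

lemma bhole_number_witness:
  assumes "simple_graph V E" "V \<noteq> {}"
  obtains s t where "0 < s" "0 < t" "s + t = bhole_number V E + 1" "\<not> has_bhole V E s t"
proof -
  have "\<not> has_bhole V E 1 (card V)"
  proof
    assume "has_bhole V E 1 (card V)"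
    then obtain S T where "S \<subseteq> V" "T \<subseteq> V" "S \<inter> T = {}" "card S = 1" "card T = card V"
      unfolding has_bhole_def by blast
    moreover have "finite V" using assms(1) by (rule simple_graph_finite)
    ultimately have "card V + 1 \<le> card V"
      by (metis card_Un_disjoint card_mono finite_subset le_sup_iff add.commute)
    then show False by simp
  qed
  moreover have "0 < card V" using assms simple_graph_finite by (auto simp: card_gt_0_iff)
  ultimately have "\<exists>k s t. 0 < s \<and> 0 < t \<and> s + t = k + 1 \<and> \<not> has_bhole V E s t"
    by (intro exI[of _ "card V"] exI[of _ 1] exI[of _ "card V"]) simp
  from LeastI_ex[OF this] show thesis
    using that unfolding bhole_number_def by blast
qed

lemma sigma2_le_degree_sum:
  assumes "u \<in> V" "v \<in> V" "u \<noteq> v" "\<not> E u v"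
  shows "sigma2 V E \<le> enat (degree V E u + degree V E v)"
  unfolding sigma2_def by (rule Inf_lower) (use assms in blast)

lemma ex_longest_path_from:
  assumes "simple_graph V E" "r \<in> R" "R \<subseteq> V"
  obtains P where "is_path V E P" "hd P \<in> R"
    "\<And>Q. is_path V E Q \<Longrightarrow> hd Q \<in> R \<Longrightarrow> length Q \<le> length P"
proof -
  have "is_path V E [r] \<and> hd [r] \<in> R" using assms by (auto simp: is_path_def)
  moreover have "\<forall>p. is_path V E p \<and> hd p \<in> R \<longrightarrow> length p < card V + 1"
    using is_path_length_le_card[OF assms(1)] by (simp add: less_Suc_eq_le)
  ultimately show thesis
    using ex_has_greatest_nat[of "\<lambda>p. is_path V E p \<and> hd p \<in> R" "[r]" length "card V + 1"] that
    by blast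
qed

lemma has_bhole_if_separated:
  assumes graph: "simple_graph V E"
    and sub: "H \<subseteq> V" "I \<subseteq> V" "X \<subseteq> V" and disj: "H \<inter> I = {}" "H \<inter> X = {}"
    and closed: "\<And>a b. a \<in> H \<Longrightarrow> E a b \<Longrightarrow> b \<in> H \<union> X"
    and indep: "\<And>a b. a \<in> I \<Longrightarrow> b \<in> I \<Longrightarrow> \<not> E a b"
    and no_edge: "\<And>a b. a \<in> H \<Longrightarrow> b \<in> I \<Longrightarrow> \<not> E a b"
    and "I \<noteq> {}" and HI: "k + 1 \<le> card H + card I"
    and rest: "k \<le> card (V - (H \<union> X)) + 1"
    and st: "0 < s" "s \<le> t" "s + t = k + 1"
  shows "has_bhole V E s t"
proof -
  have fin: "finite H" "finite I"
    using sub(1,2) simple_graph_finite[OF graph] by (simp_all add: finite_subset)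
  have I_pos: "0 < card I" using \<open>I \<noteq> {}\<close> fin(2) by (simp add: card_gt_0_iff)
  consider "s \<le> card I" | "card I < s" "s \<le> card H"
    using HI st I_pos by linarith
  then show ?thesis
  proof cases
    case 1
    then obtain S where S: "S \<subseteq> I" "card S = s" by (meson obtain_subset_with_card_n)
    have "finite S" using S(1) fin(2) by (rule finite_subset)
    then have "card ((H \<union> I) - S) = card (H \<union> I) - card S"
      using S(1) by (intro card_Diff_subset) auto
    also have "\<dots> = card H + card I - s"
      using S(2) fin disj(1) by (simp add: card_Un_disjoint)
    finally have "t \<le> card ((H \<union> I) - S)" using HI st by linarith
    then obtain T where T: "T \<subseteq> (H \<union> I) - S" "card T = t"
      by (meson obtain_subset_with_card_n)
    have "\<not> E x y" if "x \<in> S" "y \<in> T" for x y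
      using that S T indep no_edge simple_graph_sym[OF graph] by blast
    then show ?thesis using has_bholeI[of S V T E] S T sub by blast
  next
    case 2
    \<comment> \<open>now s \<ge> 2, so t \<le> k - 1 vertices fit outside H \<union> X\<close>
    then obtain S where S: "S \<subseteq> H" "card S = s" by (meson obtain_subset_with_card_n)
    have "t \<le> card (V - (H \<union> X))"
      using 2 rest st I_pos by linarith
    then obtain T where T: "T \<subseteq> V - (H \<union> X)" "card T = t" by (meson obtain_subset_with_card_n)
    have "\<not> E x y" if "x \<in> S" "y \<in> T" for x y
      using that S T closed by blast
    then show ?thesis using has_bholeI[of S V T E] S T sub by blast
  qed
qed

locale longest_path =
  fixes V :: "'a set" and E :: "'a \<Rightarrow> 'a \<Rightarrow> bool" and R :: "'a set"
    and P :: "'a list" and y :: 'a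
  assumes graph: "simple_graph V E"
    and path: "is_path V E P"
    and hd_in_R: "hd P \<in> R"
    and longest: "\<And>Q. is_path V E Q \<Longrightarrow> hd Q \<in> R \<Longrightarrow> length Q \<le> length P"
    and y_in_V: "y \<in> V" and y_off_P: "y \<notin> set P"
begin

lemma edge_sym: "E a b \<Longrightarrow> E b a"
  using graph by (rule simple_graph_sym)

lemma P_ne: "P \<noteq> []" and P_distinct: "distinct P" and P_in_V: "set P \<subseteq> V"
  using path by (auto simp: is_path_def)

lemma longest_from_hd: "is_path V E Q \<Longrightarrow> hd Q = hd P \<Longrightarrow> length Q \<le> length P"
  using longest hd_in_R by simp

text \<open>component, contacts and pre_contacts are the sets H, X and I above.\<close>

definition off_path_edge :: "'a \<Rightarrow> 'a \<Rightarrow> bool" where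
  "off_path_edge a b \<longleftrightarrow> E a b \<and> a \<notin> set P \<and> b \<notin> set P"

definition component :: "'a set" where
  "component = {z. off_path_edge\<^sup>*\<^sup>* y z}"

definition contacts :: "'a set" where
  "contacts = {x \<in> set P. \<exists>h\<in>component. E x h}"

definition contact_idx :: "nat set" where
  "contact_idx = {i. i < length P \<and> P ! i \<in> contacts}"

definition pre_contacts :: "'a set" where
  "pre_contacts = (\<lambda>i. P ! (i - 1)) ` (contact_idx - {0}) \<union> {last P}"

lemma y_in_component: "y \<in> component"
  unfolding component_def by simp

lemma component_off_P:
  assumes "z \<in> component" shows "z \<in> V \<and> z \<notin> set P"
proof -
  have "off_path_edge\<^sup>*\<^sup>* y z" using assms by (simp add: component_def)
  then show ?thesis
    by induction (use y_in_V y_off_P simple_graph_edge_in[OF graph] in \<open>auto simp: off_path_edge_def\<close>)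
qed

lemma component_subset_V: "component \<subseteq> V" and component_disjoint_P: "component \<inter> set P = {}"
  using component_off_P by blast+

lemma finite_component: "finite component"
  using component_subset_V simple_graph_finite[OF graph] by (rule finite_subset)

lemma component_path:
  assumes "a \<in> component" "b \<in> component"
  obtains q where "is_path V E q" "set q \<subseteq> component" "hd q = a" "last q = b"
proof -
  have "symp off_path_edge" by (auto simp: symp_def off_path_edge_def intro: edge_sym)
  have ya: "off_path_edge\<^sup>*\<^sup>* y a" and yb: "off_path_edge\<^sup>*\<^sup>* y b"
    using assms by (simp_all add: component_def)
  have "off_path_edge\<^sup>*\<^sup>* a y"
    using ya by (rule sympD[OF symp_rtranclp[OF \<open>symp off_path_edge\<close>]])
  then have ab: "off_path_edge\<^sup>*\<^sup>* a b" using yb by (rule rtranclp_trans)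
  obtain q where q: "q \<noteq> []" "hd q = a" "last q = b" "distinct q" "successively off_path_edge q"
    "\<forall>x\<in>set q. off_path_edge\<^sup>*\<^sup>* a x"
    using ab by (rule rtranclp_imp_successively)
  have "set q \<subseteq> component"
    using q(6) ya unfolding component_def by (auto intro: rtranclp_trans)
  moreover have "successively E q"
    using q(5) by (rule successively_mono) (simp add: off_path_edge_def)
  ultimately have "is_path V E q"
    using q(1,4) component_subset_V by (auto simp: is_path_iff_successively)
  then show thesis using that \<open>set q \<subseteq> component\<close> q(2,3) by blast
qed

lemma component_closed:
  assumes a: "a \<in> component" and e: "E a b"
  shows "b \<in> component \<union> contacts"
proof (cases "b \<in> set P")
  case True
  then show ?thesis using a edge_sym[OF e] by (auto simp: contacts_def)
next
  case False
  then have "off_path_edge a b" using e component_off_P[OF a] by (simp add: off_path_edge_def)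
  then show ?thesis using a by (auto simp: component_def)
qed

lemma contacts_subset_P: "contacts \<subseteq> set P"
  by (auto simp: contacts_def)

lemma last_not_adj_component: "h \<in> component \<Longrightarrow> \<not> E (last P) h"
proof
  assume h: "h \<in> component" and e: "E (last P) h"
  have "is_path V E (P @ [h])"
    using path e component_off_P[OF h] by (auto simp: is_path_iff_successively successively_append_iff)
  then have "length (P @ [h]) \<le> length P" using P_ne by (intro longest_from_hd) simp_all
  then show False by simp
qed

lemma contact_idx_less: "i \<in> contact_idx \<Longrightarrow> i < length P - 1"
  using last_not_adj_component P_ne
  by (fastforce simp: contact_idx_def contacts_def last_conv_nth less_diff_conv2 nat_less_le)

lemma pre_contact_not_adj_component:
  assumes i: "i \<in> contact_idx" "0 < i" and a: "a \<in> component"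
  shows "\<not> E (P ! (i - 1)) a"
proof
  assume e: "E (P ! (i - 1)) a"
  obtain b where b: "b \<in> component" "E (P ! i) b"
    using i unfolding contact_idx_def contacts_def by blast
  obtain q where q: "is_path V E q" "set q \<subseteq> component" "hd q = a" "last q = b"
    using a b(1) by (rule component_path)
  have "is_path V E (take i P @ q @ drop i P)"
    using path q e b(2) component_disjoint_P i
    by (intro is_path_insert) (auto simp: contact_idx_def intro: edge_sym)
  then have "length (take i P @ q @ drop i P) \<le> length P"
    by (rule longest_from_hd) (use i P_ne in simp)
  moreover have "q \<noteq> []" using q(1) by (simp add: is_path_def)
  ultimately show False using i by (simp add: contact_idx_def)
qed

lemma pre_contacts_not_adj:
  assumes i: "i \<in> contact_idx" "0 < i" and j: "j \<in> contact_idx" "i < j"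
  shows "\<not> E (P ! (i - 1)) (P ! (j - 1))"
proof
  assume e: "E (P ! (i - 1)) (P ! (j - 1))"
  obtain a where a: "a \<in> component" "E (P ! i) a"
    using i unfolding contact_idx_def contacts_def by blast
  obtain b where b: "b \<in> component" "E (P ! j) b"
    using j unfolding contact_idx_def contacts_def by blast
  obtain q where q: "is_path V E q" "set q \<subseteq> component" "hd q = a" "last q = b"
    using a(1) b(1) by (rule component_path)
  have "is_path V E (take i P @ rev (take (j - i) (drop i P)) @ q @ drop j P)"
    using path q e a(2) b(2) component_disjoint_P i j
    by (intro is_path_reverse_segment_insert) (auto simp: contact_idx_def intro: edge_sym)
  then have "length (take i P @ rev (take (j - i) (drop i P)) @ q @ drop j P) \<le> length P"
    by (rule longest_from_hd) (use i P_ne in simp)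
  moreover have "q \<noteq> []" using q(1) by (simp add: is_path_def)
  ultimately show False using j by (simp add: contact_idx_def min_def split: if_splits)
qed

lemma pre_contact_not_adj_last:
  assumes i: "i \<in> contact_idx" "0 < i"
  shows "\<not> E (P ! (i - 1)) (last P)"
proof
  assume e: "E (P ! (i - 1)) (last P)"
  obtain a where a: "a \<in> component" "E (P ! i) a"
    using i unfolding contact_idx_def contacts_def by blast
  have "is_path V E (take i P @ rev (drop i P) @ [a])"
    using path e a(2) component_off_P[OF a(1)] i
    by (intro is_path_reverse_tail_extend) (auto simp: contact_idx_def intro: edge_sym)
  then have "length (take i P @ rev (drop i P) @ [a]) \<le> length P"
    by (rule longest_from_hd) (use i P_ne in simp)
  then show False by simp
qed

lemma hd_adj_component_not_in_R:
  assumes h: "h \<in> component" "E (hd P) h"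
  shows "h \<notin> R" and "last P \<notin> R"
proof
  assume "h \<in> R"
  have "is_path V E (h # P)"
    using path component_off_P[OF h(1)] edge_sym[OF h(2)] P_ne
    by (auto simp: is_path_iff_successively successively_Cons)
  then have "length (h # P) \<le> length P" using longest \<open>h \<in> R\<close> by fastforce
  then show False by simp
next
  show "last P \<notin> R"
  proof
    assume "last P \<in> R"
    have "successively E (rev P)"
      using edge_sym path by (intro successively_rev_if_sym) (auto simp: is_path_iff_successively)
    then have "is_path V E (rev P @ [h])"
      using path component_off_P[OF h(1)] h(2) P_ne
      by (auto simp: is_path_iff_successively successively_append_iff last_rev)
    then have "length (rev P @ [h]) \<le> length P"
      using longest \<open>last P \<in> R\<close> P_ne by (fastforce simp: hd_rev)
    then show False by simp
  qed
qed

lemma pre_contacts_cases: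
  assumes "z \<in> pre_contacts"
  obtains "z = last P" | i where "i \<in> contact_idx" "0 < i" "z = P ! (i - 1)"
  using assms unfolding pre_contacts_def by blast

lemma pre_contacts_subset_P: "pre_contacts \<subseteq> set P"
proof
  fix z assume "z \<in> pre_contacts"
  then show "z \<in> set P"
  proof (cases rule: pre_contacts_cases)
    case 1
    then show ?thesis using P_ne by simp
  next
    case (2 i)
    then show ?thesis using contact_idx_less[OF 2(1)] by simp
  qed
qed

lemma pre_contacts_independent:
  assumes "a \<in> pre_contacts" "b \<in> pre_contacts"
  shows "\<not> E a b"
proof -
  have not_adj_last: "\<not> E a (last P)" if "a \<in> pre_contacts" for a
    using that simple_graph_irrefl[OF graph] pre_contact_not_adj_last
    by (cases rule: pre_contacts_cases) auto
  show ?thesis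
    using assms(2)
  proof (cases rule: pre_contacts_cases)
    case 1
    then show ?thesis using not_adj_last[OF assms(1)] by simp
  next
    case (2 j)
    show ?thesis
      using assms(1)
    proof (cases rule: pre_contacts_cases)
      case 1
      then show ?thesis using not_adj_last[OF assms(2)] edge_sym by blast
    next
      case (2 i)
      consider "i = j" | "i < j" | "j < i" by linarith
      then show ?thesis
        using 2 \<open>b = P ! (j - 1)\<close> \<open>j \<in> contact_idx\<close> \<open>0 < j\<close>
          pre_contacts_not_adj simple_graph_irrefl[OF graph] edge_sym
        by cases blast+
    qed
  qed
qed

lemma component_pre_contacts_not_adj: "h \<in> component \<Longrightarrow> z \<in> pre_contacts \<Longrightarrow> \<not> E h z"
  by (erule pre_contacts_cases)
    (use last_not_adj_component pre_contact_not_adj_component edge_sym in blast)+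

lemma finite_contact_idx: "finite contact_idx"
  by (simp add: contact_idx_def)

lemma card_contacts: "card contacts = card contact_idx"
proof -
  have "contacts = (\<lambda>i. P ! i) ` contact_idx"
  proof
    show "contacts \<subseteq> (\<lambda>i. P ! i) ` contact_idx"
    proof
      fix x assume "x \<in> contacts"
      moreover obtain i where "i < length P" "P ! i = x"
        using \<open>x \<in> contacts\<close> contacts_subset_P by (metis in_set_conv_nth subsetD)
      ultimately show "x \<in> (\<lambda>i. P ! i) ` contact_idx" by (auto simp: contact_idx_def)
    qed
  qed (auto simp: contact_idx_def)
  moreover have "inj_on (\<lambda>i. P ! i) contact_idx"
    using P_distinct by (auto simp: inj_on_def contact_idx_def nth_eq_iff_index_eq)
  ultimately show ?thesis by (simp add: card_image)
qed

lemma card_pre_contacts: "card pre_contacts = card (contact_idx - {0}) + 1"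
proof -
  have inj: "inj_on (\<lambda>i. P ! (i - 1)) (contact_idx - {0})"
  proof (rule inj_onI)
    fix i j assume ij: "i \<in> contact_idx - {0}" "j \<in> contact_idx - {0}" "P ! (i - 1) = P ! (j - 1)"
    moreover have "i - 1 < length P" "j - 1 < length P"
      using ij contact_idx_less by fastforce+
    ultimately have "i - 1 = j - 1"
      using P_distinct by (simp add: nth_eq_iff_index_eq)
    then show "i = j" using ij by auto
  qed
  have "last P \<notin> (\<lambda>i. P ! (i - 1)) ` (contact_idx - {0})"
  proof
    assume "last P \<in> (\<lambda>i. P ! (i - 1)) ` (contact_idx - {0})"
    then obtain i where i: "i \<in> contact_idx" "P ! (length P - 1) = P ! (i - 1)"
      using P_ne by (auto simp: last_conv_nth)
    then have "length P - 1 = i - 1"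
      using P_distinct contact_idx_less[OF i(1)] by (simp add: nth_eq_iff_index_eq)
    then show False using contact_idx_less[OF i(1)] by simp
  qed
  then show ?thesis
    unfolding pre_contacts_def using inj finite_contact_idx by (simp add: card_image)
qed

lemma card_pre_contacts_if_hd_contact: "hd P \<in> contacts \<Longrightarrow> card pre_contacts = card contacts"
  using P_ne card_Suc_Diff1[OF finite_contact_idx, of 0]
  by (simp add: card_pre_contacts card_contacts contact_idx_def hd_conv_nth)

lemma card_pre_contacts_if_hd_not_contact:
  "hd P \<notin> contacts \<Longrightarrow> card pre_contacts = card contacts + 1"
  using P_ne by (simp add: card_pre_contacts card_contacts contact_idx_def hd_conv_nth)

lemma degree_component_le:
  assumes "h \<in> component"
  shows "degree V E h + 1 \<le> card component + card contacts"
proof -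
  have "{z \<in> V. E h z} \<subseteq> (component - {h}) \<union> contacts"
    using component_closed[OF assms] simple_graph_irrefl[OF graph] by blast
  then have "degree V E h \<le> card ((component - {h}) \<union> contacts)"
    unfolding degree_def using finite_component contacts_subset_P
    by (intro card_mono) (auto intro: finite_subset)
  also have "\<dots> \<le> card (component - {h}) + card contacts" by (rule card_Un_le)
  finally show ?thesis
    using card_Suc_Diff1[OF finite_component assms] by simp
qed

lemma degree_pre_contact_le_outside:
  assumes z: "z \<in> pre_contacts"
  shows "degree V E z \<le> card (V - (component \<union> contacts))"
proof -
  define N where "N = {v \<in> V. E z v}"
  have fin: "finite V" "finite pre_contacts"
    using simple_graph_finite[OF graph] pre_contacts_subset_P by (auto intro: finite_subset)
  have "component \<inter> N = {}" "pre_contacts \<inter> N = {}" "component \<inter> pre_contacts = {}"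
    using component_pre_contacts_not_adj[OF _ z] pre_contacts_independent[OF z] edge_sym
      component_disjoint_P pre_contacts_subset_P
    unfolding N_def by blast+
  moreover have "component \<union> pre_contacts \<union> N \<subseteq> V"
    using component_subset_V pre_contacts_subset_P P_in_V unfolding N_def by blast
  ultimately have "card component + card pre_contacts + card N \<le> card V"
    using fin finite_component card_mono[OF fin(1)]
    by (metis Int_Un_distrib2 Un_empty card_Un_disjoint finite_Un infinite_super)
  moreover have "card contacts \<le> card pre_contacts"
    using card_pre_contacts_if_hd_contact card_pre_contacts_if_hd_not_contact
    by (cases "hd P \<in> contacts") simp_all
  moreover have "card (V - (component \<union> contacts)) = card V - (card component + card contacts)"
  proof -
    have "finite contacts" using contacts_subset_P by (rule finite_subset) simp
    moreover have "component \<inter> contacts = {}" using component_disjoint_P contacts_subset_P by blast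
    ultimately have "card (component \<union> contacts) = card component + card contacts"
      using finite_component by (simp add: card_Un_disjoint)
    moreover have "component \<union> contacts \<subseteq> V" using component_subset_V contacts_subset_P P_in_V by blast
    ultimately show ?thesis using fin(1) by (metis card_Diff_subset finite_subset)
  qed
  ultimately show ?thesis by (simp add: N_def degree_def)
qed

text \<open>The hypotheses below are what sigma2 \<ge> 2k - 2 and the choice of R as the vertices of
degree less than k (or V if there are none) provide.\<close>

context
  fixes k :: nat
  assumes deg_sum: "\<And>u v. u \<in> V \<Longrightarrow> v \<in> V \<Longrightarrow> u \<noteq> v \<Longrightarrow> \<not> E u v \<Longrightarrow>
      2 * k - 2 \<le> degree V E u + degree V E v"
    and high_outside_R: "\<And>v. v \<in> V \<Longrightarrow> v \<notin> R \<Longrightarrow> k \<le> degree V E v"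
    and low_R: "(\<forall>v\<in>R. degree V E v + 1 \<le> k) \<or> (\<forall>v\<in>V. k \<le> degree V E v)"
begin

lemma large_component_pre_contacts:
  assumes conn: "connected_graph V E"
  obtains z where "z \<in> pre_contacts" "k \<le> degree V E z + 1"
    "k + 1 \<le> card component + card pre_contacts"
proof (cases "hd P \<in> contacts")
  case True
  then obtain h where h: "h \<in> component" "E (hd P) h" by (auto simp: contacts_def intro: edge_sym)
  have "k \<le> degree V E h" "k \<le> degree V E (last P)"
    using hd_adj_component_not_in_R[OF h] high_outside_R component_subset_V h(1) P_in_V last_in_set[OF P_ne]
    by auto
  moreover have "last P \<in> pre_contacts" by (simp add: pre_contacts_def)
  ultimately show thesis
    using that degree_component_le[OF h(1)] card_pre_contacts_if_hd_contact[OF True] by simp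
next
  case False
  have "contacts \<noteq> {}"
  proof
    assume "contacts = {}"
    then have "hd P \<in> component"
      using connected_graph_closed_set[OF conn y_in_component component_subset_V] component_closed P_in_V
        hd_in_set[OF P_ne]
      by blast
    then show False using component_disjoint_P P_ne by auto
  qed
  then obtain i where i: "i \<in> contact_idx"
    using contacts_subset_P by (fastforce simp: contact_idx_def in_set_conv_nth)
  have "i \<noteq> 0"
  proof
    assume "i = 0"
    then show False using i False P_ne by (simp add: contact_idx_def hd_conv_nth)
  qed
  then have pre: "P ! (i - 1) \<in> pre_contacts" "last P \<in> pre_contacts"
    using i by (auto simp: pre_contacts_def)
  have "P ! (i - 1) \<noteq> last P"
    using contact_idx_less[OF i] P_distinct P_ne by (simp add: last_conv_nth nth_eq_iff_index_eq)
  then have "k \<le> degree V E (P ! (i - 1)) + 1 \<or> k \<le> degree V E (last P) + 1"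
    using deg_sum[of "P ! (i - 1)" "last P"] pre pre_contacts_subset_P P_in_V
      pre_contacts_independent
    by fastforce
  then obtain z where z: "z \<in> pre_contacts" "k \<le> degree V E z + 1" using pre by blast
  have "\<not> E y (hd P)" using False y_in_component edge_sym P_ne by (auto simp: contacts_def)
  moreover have "y \<noteq> hd P" using y_off_P P_ne by auto
  ultimately have "2 * k - 2 \<le> degree V E y + degree V E (hd P)"
    using deg_sum y_in_V P_in_V hd_in_set[OF P_ne] by blast
  then have "k \<le> degree V E y + 1"
    using low_R hd_in_R y_in_V by auto
  then show thesis
    using that[OF z] degree_component_le[OF y_in_component] card_pre_contacts_if_hd_not_contact[OF False]
    by simp
qed

lemma has_bhole_every_split:
  assumes conn: "connected_graph V E" and st: "0 < s" "0 < t" "s + t = k + 1"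
  shows "has_bhole V E s t"
proof -
  obtain z where z: "z \<in> pre_contacts" "k \<le> degree V E z + 1"
    and large: "k + 1 \<le> card component + card pre_contacts"
    using large_component_pre_contacts[OF conn] .
  have ne: "pre_contacts \<noteq> {}" using z(1) by blast
  have sub: "pre_contacts \<subseteq> V" "contacts \<subseteq> V"
    using pre_contacts_subset_P contacts_subset_P P_in_V by auto
  have disj: "component \<inter> pre_contacts = {}" "component \<inter> contacts = {}"
    using component_disjoint_P pre_contacts_subset_P contacts_subset_P by auto
  have rest: "k \<le> card (V - (component \<union> contacts)) + 1"
    using degree_pre_contact_le_outside[OF z(1)] z(2) by simp
  have ordered: "has_bhole V E a b" if "0 < a" "a \<le> b" "a + b = k + 1" for a b
    using graph component_subset_V sub disj component_closed pre_contacts_independent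
      component_pre_contacts_not_adj ne large rest that
    by (rule has_bhole_if_separated)
  show ?thesis
  proof (cases "s \<le> t")
    case True
    then show ?thesis using ordered st by blast
  next
    case False
    then have "has_bhole V E t s" using ordered st by simp
    then show ?thesis by (rule has_bhole_swap[OF graph])
  qed
qed

end

end

theorem mainTheorem2:
  fixes V :: "'a set" and E :: "'a \<Rightarrow> 'a \<Rightarrow> bool"
  assumes "simple_graph V E"
    and "connected_graph V E"
    and "sigma2 V E \<ge> enat (2 * bhole_number V E - 2)"
  shows "traceable V E"
proof (rule ccontr)
  assume not_traceable: "\<not> traceable V E"
  define k where "k = bhole_number V E"
  have "V \<noteq> {}" using assms(2) by (simp add: connected_graph_def)
  then obtain s t where st: "0 < s" "0 < t" "s + t = k + 1" "\<not> has_bhole V E s t"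
    using bhole_number_witness[OF assms(1)] unfolding k_def by blast
  have deg_sum: "2 * k - 2 \<le> degree V E u + degree V E v"
    if "u \<in> V" "v \<in> V" "u \<noteq> v" "\<not> E u v" for u v
    using order_trans[OF assms(3) sigma2_le_degree_sum[of u V v E, OF that]] by (simp add: k_def)
  define low where "low = {v \<in> V. degree V E v + 1 \<le> k}"
  define R where "R = (if low = {} then V else low)"
  have "R \<subseteq> V" "R \<noteq> {}" using \<open>V \<noteq> {}\<close> by (auto simp: R_def low_def)
  then obtain P where P: "is_path V E P" "hd P \<in> R"
    "\<And>Q. is_path V E Q \<Longrightarrow> hd Q \<in> R \<Longrightarrow> length Q \<le> length P"
    using ex_longest_path_from[OF assms(1)] by blast
  obtain y where "y \<in> V" "y \<notin> set P"
    using not_traceable P(1) unfolding traceable_def is_path_def by blast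
  then interpret longest_path V E R P y
    using assms(1) P by unfold_locales
  have "has_bhole V E s t"
    by (rule has_bhole_every_split[OF deg_sum _ _ assms(2) st(1-3)])
      (auto simp: R_def low_def split: if_splits)
  with st(4) show False by simp
qed

end
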